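(* (1) If $0<t<7$, $t\ne1$, $0<u<\mu_A(t)$ and $u\ne\frac{3(t-1)^2(t+2)}{2t+1}$, then $\mathfrak{e}^A_{t,u}(a^2,b^2,c^2)\notin\Sigma_{3,10}$. (2) If $t>2$, $\mu_B(t)<u<1$ and $b^B_1(t,\omega(u))\ne0$, where $b^B_1(t,w)=(2t+1)w-t(t-4)$, then $\mathfrak{e}^B_{t,u}(a^2,b^2,c^2)\notin\Sigma_{3,10}$.
   Context: Let $a,b,c$ be variables. For nonnegative integers $m,n$ put $S_{m,n}=a^mb^n+b^mc^n+c^ma^n$, $S_n=S_{n,0}=a^n+b^n+c^n$, $T_{m,n}=S_{m,n}+S_{n,m}$, $U=abc$ (so $S_{1,1}=ab+bc+ca$). Put $s_0=S_5-US_{1,1}$, $s_1=T_{4,1}-2US_{1,1}$, $s_2=T_{3,2}-2US_{1,1}$, $s_3=US_2-US_{1,1}$, $s_4=US_{1,1}$. $\Sigma_{3,10}$ denotes the cone of real ternary forms of degree 10 that are sums of squares of real ternary quintic forms. Auxiliary functions: $\mu_L(t)=9(t-1)^2$, $\mu_H(t)=(t+2)(7-t)$, $\mu_A(t)=\min\{\mu_L(t),\mu_H(t)\}$, $\mu_R(t)=2-t^2+t\sqrt{(t-1)(t+2)}$, $\mu_B(t)=\tfrac12\big(\mu_R(t)-\sqrt{\mu_R(t)^2-4}\big)$ (for $t\ge2$), $\omega(u)=u+\frac1u-2$. Family A: for $u>0$, $\mathfrak{e}^A_{t,u}=s_0+\sum_{i=1}^4p^A_i(t,u)s_i$ where $p^A_1=\dfrac{u^2-(t+2)(5t^2+t+9)u+9(t-1)^2(t+2)^2}{(5t+1)(t+2)u}$,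 $p^A_2=\dfrac{-t^2u^3+(t-1)(7t^3-t^2+11t+1)u^2+(t+2)(17t^5-25t^4+199t^3-59t^2+76t+8)u+9(t-1)^4(t+2)^2(t^2-12t-1)}{(5t+1)^3(t+2)u}$, $p^A_3=\dfrac{(2t^3+4t^2+5t+1)u^3-2(t+2)(7t^4+42t^3+37t^2+48t+10)u^2+(t+2)^2(91t^5+125t^4+682t^3+182t^2+523t+125)u-18(t-1)^2(t+2)^3(t^4+36t^3+34t^2+60t+13)}{(t+2)^2(5t+1)^3u}$, $p^A_4=\dfrac{(t-1)^3(6t^2+6t-12+u)^3}{(t+2)^2(5t+1)^3u}$. Family B: with $p^B_1(t,w)=-2w-3$, $p^B_2(t,w)=w^2+2w+2$, $p^B_3(t,w)=-\frac{2t^3+4t^2+5t+1}{t^2(t+2)}w^2+\frac{2(4t^2+5t+3)}{t+2}w-\frac{3t^3-7t^2-12t-8}{t+2}$, $p^B_4(t,w)=\frac{(t-1)^3(-w^2-2t^2w+t^2(t-2))}{t^2(t+2)}$, put $\mathfrak{e}^B_{t,u}=s_0+\sum_{i=1}^4p^B_i(t,\omega(u))s_i$. *)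

theory Defs
  imports Complex_Main
begin

definition S :: "nat \<Rightarrow> nat \<Rightarrow> real \<Rightarrow> real \<Rightarrow> real \<Rightarrow> real" where
  "S m n a b c = a^m * b^n + b^m * c^n + c^m * a^n"

definition T :: "nat \<Rightarrow> nat \<Rightarrow> real \<Rightarrow> real \<Rightarrow> real \<Rightarrow> real" where
  "T m n a b c = S m n a b c + S n m a b c"

definition U :: "real \<Rightarrow> real \<Rightarrow> real \<Rightarrow> real" where
  "U a b c = a * b * c"

definition sfam :: "nat \<Rightarrow> real \<Rightarrow> real \<Rightarrow> real \<Rightarrow> real" where
  "sfam i a b c =
    (if i = 0 then S 5 0 a b c - U a b c * S 1 1 a b c
     else if i = 1 then T 4 1 a b c - 2 * U a b c * S 1 1 a b c
     else if i = 2 then T 3 2 a b c - 2 * U a b c * S 1 1 a b c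
     else if i = 3 then U a b c * S 2 0 a b c - U a b c * S 1 1 a b c
     else U a b c * S 1 1 a b c)"

definition muL :: "real \<Rightarrow> real" where "muL t = 9 * (t - 1)^2"
definition muH :: "real \<Rightarrow> real" where "muH t = (t + 2) * (7 - t)"
definition muA :: "real \<Rightarrow> real" where "muA t = min (muL t) (muH t)"
definition muR :: "real \<Rightarrow> real" where
  "muR t = 2 - t^2 + t * sqrt ((t - 1) * (t + 2))"
definition muB :: "real \<Rightarrow> real" where
  "muB t = (muR t - sqrt ((muR t)^2 - 4)) / 2"
definition omega :: "real \<Rightarrow> real" where "omega u = u + 1 / u - 2"

definition pA1 :: "real \<Rightarrow> real \<Rightarrow> real" where
  "pA1 t u = (u^2 - (t + 2) * (5*t^2 + t + 9) * u + 9 * (t - 1)^2 * (t + 2)^2)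
             / ((5*t + 1) * (t + 2) * u)"

definition pA2 :: "real \<Rightarrow> real \<Rightarrow> real" where
  "pA2 t u = (- (t^2) * u^3 + (t - 1) * (7*t^3 - t^2 + 11*t + 1) * u^2
      + (t + 2) * (17*t^5 - 25*t^4 + 199*t^3 - 59*t^2 + 76*t + 8) * u
      + 9 * (t - 1)^4 * (t + 2)^2 * (t^2 - 12*t - 1))
     / ((5*t + 1)^3 * (t + 2) * u)"

definition pA3 :: "real \<Rightarrow> real \<Rightarrow> real" where
  "pA3 t u = ((2*t^3 + 4*t^2 + 5*t + 1) * u^3
      - 2 * (t + 2) * (7*t^4 + 42*t^3 + 37*t^2 + 48*t + 10) * u^2
      + (t + 2)^2 * (91*t^5 + 125*t^4 + 682*t^3 + 182*t^2 + 523*t + 125) * u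
      - 18 * (t - 1)^2 * (t + 2)^3 * (t^4 + 36*t^3 + 34*t^2 + 60*t + 13))
     / ((t + 2)^2 * (5*t + 1)^3 * u)"

definition pA4 :: "real \<Rightarrow> real \<Rightarrow> real" where
  "pA4 t u = ((t - 1)^3 * (6*t^2 + 6*t - 12 + u)^3) / ((t + 2)^2 * (5*t + 1)^3 * u)"

definition eA :: "real \<Rightarrow> real \<Rightarrow> real \<Rightarrow> real \<Rightarrow> real \<Rightarrow> real" where
  "eA t u a b c = sfam 0 a b c + pA1 t u * sfam 1 a b c + pA2 t u * sfam 2 a b c
                  + pA3 t u * sfam 3 a b c + pA4 t u * sfam 4 a b c"

definition pB1 :: "real \<Rightarrow> real \<Rightarrow> real" where "pB1 t w = - 2 * w - 3"
definition pB2 :: "real \<Rightarrow> real \<Rightarrow> real" where "pB2 t w = w^2 + 2 * w + 2"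
definition pB3 :: "real \<Rightarrow> real \<Rightarrow> real" where
  "pB3 t w = - ((2*t^3 + 4*t^2 + 5*t + 1) / (t^2 * (t + 2))) * w^2
             + (2 * (4*t^2 + 5*t + 3) / (t + 2)) * w
             - (3*t^3 - 7*t^2 - 12*t - 8) / (t + 2)"
definition pB4 :: "real \<Rightarrow> real \<Rightarrow> real" where
  "pB4 t w = ((t - 1)^3 * (- (w^2) - 2 * t^2 * w + t^2 * (t - 2))) / (t^2 * (t + 2))"

definition eB :: "real \<Rightarrow> real \<Rightarrow> real \<Rightarrow> real \<Rightarrow> real \<Rightarrow> real" where
  "eB t u a b c = (let w = omega u in
      sfam 0 a b c + pB1 t w * sfam 1 a b c + pB2 t w * sfam 2 a b c
      + pB3 t w * sfam 3 a b c + pB4 t w * sfam 4 a b c)"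

definition bB1 :: "real \<Rightarrow> real \<Rightarrow> real" where "bB1 t w = (2*t + 1) * w - t * (t - 4)"

definition ternary_form :: "nat \<Rightarrow> (real \<Rightarrow> real \<Rightarrow> real \<Rightarrow> real) \<Rightarrow> bool" where
  "ternary_form d q \<longleftrightarrow> (\<exists>coef :: nat \<Rightarrow> nat \<Rightarrow> real. \<forall>a b c.
      q a b c = (\<Sum>i\<le>d. \<Sum>j\<le>d - i. coef i j * a^i * b^j * c^(d - i - j)))"

definition Sigma_3_10 :: "(real \<Rightarrow> real \<Rightarrow> real \<Rightarrow> real) \<Rightarrow> bool" where
  "Sigma_3_10 F \<longleftrightarrow> (\<exists>qs. (\<forall>q\<in>set qs. ternary_form 5 q) \<and>
      (\<forall>a b c. F a b c = (\<Sum>q\<leftarrow>qs. (q a b c)^2)))"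

end

theory Submission
  imports Defs
begin

text \<open>If \<open>F(a\<^sup>2,b\<^sup>2,c\<^sup>2) = \<Sum> q\<^sub>k\<^sup>2\<close> with quintics \<open>q\<^sub>k\<close>, then every \<open>q\<^sub>k\<close> vanishes wherever \<open>F(a\<^sup>2,b\<^sup>2,c\<^sup>2)\<close> does.
  A zero \<open>(a,b,c)\<close> of \<open>F\<close> with \<open>a > 0\<close>, \<open>b, c \<ge> 0\<close> yields eight zeros \<open>(\<plusminus>\<surd>a, \<plusminus>\<surd>b, \<plusminus>\<surd>c)\<close> of
  \<open>q\<^sub>k\<close>; averaging over the signs isolates the part of \<open>q\<^sub>k\<close> odd in the first variable and even
  in the others, which is \<open>x\<close> times a quadratic form \<open>h\<close> in \<open>x\<^sup>2, y\<^sup>2, z\<^sup>2\<close> with six coefficients, and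
  shows that \<open>h(a,b,c) = 0\<close>. For both families six such zeros are known explicitly (two cyclic
  orbits), and the corresponding \<open>6 \<times> 6\<close> linear system is nonsingular off the excluded parameter
  values, so \<open>h = 0\<close>; in particular the coefficient of \<open>x\<^sup>5\<close> in every \<open>q\<^sub>k\<close> vanishes. Then
  \<open>F(1,0,0) = \<Sum> q\<^sub>k(1,0,0)\<^sup>2 = 0\<close>, whereas the coefficient of \<open>a\<^sup>5\<close> in both families is \<open>1\<close>.\<close>

text \<open>For the quintic \<open>q\<close> with coefficient array \<open>cf\<close> (as in ternary_form),
  \<open>x * x_odd_part cf (x\<^sup>2) (y\<^sup>2) (z\<^sup>2)\<close> collects the terms of \<open>q\<close> odd in \<open>x\<close> and even in \<open>y\<close> and \<open>z\<close>.\<close>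
definition x_odd_part :: "(nat \<Rightarrow> nat \<Rightarrow> real) \<Rightarrow> real \<Rightarrow> real \<Rightarrow> real \<Rightarrow> real" where
  "x_odd_part cf a b c =
     cf 5 0 * a^2 + cf 3 2 * a * b + cf 3 0 * a * c + cf 1 4 * b^2 + cf 1 2 * b * c + cf 1 0 * c^2"

lemma quintic_coeff_sum_expand:
  "(\<Sum>i\<le>5. \<Sum>j\<le>5 - i. cf i j * x^i * y^j * z^(5 - i - j) :: real) =
      cf 0 0 * z^5 + cf 0 1 * y * z^4 + cf 0 2 * y^2 * z^3 + cf 0 3 * y^3 * z^2
    + cf 0 4 * y^4 * z + cf 0 5 * y^5
    + cf 1 0 * x * z^4 + cf 1 1 * x * y * z^3 + cf 1 2 * x * y^2 * z^2 + cf 1 3 * x * y^3 * z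
    + cf 1 4 * x * y^4
    + cf 2 0 * x^2 * z^3 + cf 2 1 * x^2 * y * z^2 + cf 2 2 * x^2 * y^2 * z + cf 2 3 * x^2 * y^3
    + cf 3 0 * x^3 * z^2 + cf 3 1 * x^3 * y * z + cf 3 2 * x^3 * y^2
    + cf 4 0 * x^4 * z + cf 4 1 * x^4 * y + cf 5 0 * x^5"
  by (simp add: numeral_eq_Suc atMost_Suc algebra_simps)

lemma quintic_sign_sum_eq_x_odd_part:
  assumes q: "\<forall>x y z. q x y z = (\<Sum>i\<le>5. \<Sum>j\<le>5 - i. cf i j * x^i * y^j * z^(5 - i - j))"
  shows "q x y z + q x (-y) z + q x y (-z) + q x (-y) (-z)
       - q (-x) y z - q (-x) (-y) z - q (-x) y (-z) - q (-x) (-y) (-z)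
       = 8 * x * x_odd_part cf (x^2) (y^2) (z^2)"
  unfolding q[rule_format] quintic_coeff_sum_expand x_odd_part_def by algebra

lemma x_odd_part_eq_0_if_vanishing:
  assumes q: "\<forall>x y z. q x y z = (\<Sum>i\<le>5. \<Sum>j\<le>5 - i. cf i j * x^i * y^j * z^(5 - i - j))"
    and "0 < a" "0 \<le> b" "0 \<le> c"
    and zero: "\<And>x y z. x^2 = a \<Longrightarrow> y^2 = b \<Longrightarrow> z^2 = c \<Longrightarrow> q x y z = 0"
  shows "x_odd_part cf a b c = 0"
proof -
  define x y z where "x = sqrt a" and "y = sqrt b" and "z = sqrt c"
  have "x^2 = a" "y^2 = b" "z^2 = c" "0 < x"
    using assms(2-4) unfolding x_def y_def z_def by simp_all
  then have "8 * x * x_odd_part cf a b c = 0"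
    using quintic_sign_sum_eq_x_odd_part[OF q, of x y z] zero by simp
  with \<open>0 < x\<close> show ?thesis by simp
qed

lemma sum_list_squares_eq_0_iff:
  "(\<Sum>q\<leftarrow>qs. (f q)^2) = (0::real) \<longleftrightarrow> (\<forall>q\<in>set qs. f q = 0)"
  by (subst sum_list_nonneg_eq_0_iff) auto

lemma not_Sigma_3_10_by_zeros:
  fixes G :: "real \<Rightarrow> real \<Rightarrow> real \<Rightarrow> real" and Z :: "(real \<times> real \<times> real) set"
  assumes "G 1 0 0 \<noteq> 0"
    and zeros: "\<And>a b c. (a, b, c) \<in> Z \<Longrightarrow> 0 < a \<and> 0 \<le> b \<and> 0 \<le> c \<and> G a b c = 0"
    and nonsingular: "\<And>cf. (\<And>a b c. (a, b, c) \<in> Z \<Longrightarrow> x_odd_part cf a b c = 0) \<Longrightarrow> cf 5 0 = 0"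
  shows "\<not> Sigma_3_10 (\<lambda>x y z. G (x^2) (y^2) (z^2))"
proof
  assume "Sigma_3_10 (\<lambda>x y z. G (x^2) (y^2) (z^2))"
  then obtain qs where forms: "\<forall>q\<in>set qs. ternary_form 5 q"
    and sos: "\<forall>x y z. G (x^2) (y^2) (z^2) = (\<Sum>q\<leftarrow>qs. (q x y z)^2)"
    unfolding Sigma_3_10_def by blast
  have "q 1 0 0 = 0" if "q \<in> set qs" for q
  proof -
    obtain cf where cf: "\<forall>x y z. q x y z = (\<Sum>i\<le>5. \<Sum>j\<le>5 - i. cf i j * x^i * y^j * z^(5 - i - j))"
      using forms \<open>q \<in> set qs\<close> unfolding ternary_form_def by blast
    have "cf 5 0 = 0"
    proof (rule nonsingular)
      fix a b c assume "(a, b, c) \<in> Z"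
      with zeros have "0 < a" "0 \<le> b" "0 \<le> c" and "G a b c = 0" by auto
      moreover have "q x y z = 0" if "G (x^2) (y^2) (z^2) = 0" for x y z
        using that sos \<open>q \<in> set qs\<close> by (simp add: sum_list_squares_eq_0_iff)
      ultimately show "x_odd_part cf a b c = 0"
        by (intro x_odd_part_eq_0_if_vanishing[OF cf]) auto
    qed
    then show ?thesis using cf quintic_coeff_sum_expand[of cf 1 0 0] by simp
  qed
  then have "G 1 0 0 = 0"
    using sos[rule_format, of 1 0 0] by (simp add: sum_list_squares_eq_0_iff)
  with \<open>G 1 0 0 \<noteq> 0\<close> show False ..
qed

lemma sfam_cyclic: "sfam i a b c = sfam i b c a"
  by (simp add: sfam_def S_def T_def U_def algebra_simps)

lemma eA_cyclic: "eA t u a b c = eA t u b c a"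
  unfolding eA_def sfam_cyclic[of _ a b c] ..

lemma eB_cyclic: "eB t u a b c = eB t u b c a"
  unfolding eB_def sfam_cyclic[of _ a b c] ..

definition eA_numer :: "real \<Rightarrow> real \<Rightarrow> real \<Rightarrow> real \<Rightarrow> real \<Rightarrow> real" where
  "eA_numer t u a b c =
      (t+2)^2 * (5*t+1)^3 * u * sfam 0 a b c
    + (t+2) * (5*t+1)^2 * (u^2 - (t+2) * (5*t^2 + t + 9) * u + 9 * (t-1)^2 * (t+2)^2) * sfam 1 a b c
    + (t+2) * (- (t^2) * u^3 + (t-1) * (7*t^3 - t^2 + 11*t + 1) * u^2
        + (t+2) * (17*t^5 - 25*t^4 + 199*t^3 - 59*t^2 + 76*t + 8) * u
        + 9 * (t-1)^4 * (t+2)^2 * (t^2 - 12*t - 1)) * sfam 2 a b c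
    + ((2*t^3 + 4*t^2 + 5*t + 1) * u^3
        - 2 * (t+2) * (7*t^4 + 42*t^3 + 37*t^2 + 48*t + 10) * u^2
        + (t+2)^2 * (91*t^5 + 125*t^4 + 682*t^3 + 182*t^2 + 523*t + 125) * u
        - 18 * (t-1)^2 * (t+2)^3 * (t^4 + 36*t^3 + 34*t^2 + 60*t + 13)) * sfam 3 a b c
    + (t-1)^3 * (6*t^2 + 6*t - 12 + u)^3 * sfam 4 a b c"

lemma eA_eq_numer_div:
  assumes "0 < t" "0 < u"
  shows "eA t u a b c = eA_numer t u a b c / ((t+2)^2 * (5*t+1)^3 * u)"
proof -
  have nz: "t + 2 \<noteq> 0" "5*t + 1 \<noteq> 0" "u \<noteq> 0" using assms by auto
  define D where "D = (t+2)^2 * (5*t+1)^3 * u"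
  have D_factors: "D = (t+2) * (5*t+1)^2 * ((5*t+1) * (t+2) * u)"
    "D = (t+2) * ((5*t+1)^3 * (t+2) * u)"
    unfolding D_def by algebra+
  have "pA1 t u * D =
      (t+2) * (5*t+1)^2 * (u^2 - (t+2) * (5*t^2 + t + 9) * u + 9 * (t-1)^2 * (t+2)^2)"
    using nz unfolding pA1_def D_factors(1) by simp
  moreover have "pA2 t u * D = (t+2) * (- (t^2) * u^3 + (t-1) * (7*t^3 - t^2 + 11*t + 1) * u^2
        + (t+2) * (17*t^5 - 25*t^4 + 199*t^3 - 59*t^2 + 76*t + 8) * u
        + 9 * (t-1)^4 * (t+2)^2 * (t^2 - 12*t - 1))"
    using nz unfolding pA2_def D_factors(2) by simp
  moreover have "pA3 t u * D = (2*t^3 + 4*t^2 + 5*t + 1) * u^3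
        - 2 * (t+2) * (7*t^4 + 42*t^3 + 37*t^2 + 48*t + 10) * u^2
        + (t+2)^2 * (91*t^5 + 125*t^4 + 682*t^3 + 182*t^2 + 523*t + 125) * u
        - 18 * (t-1)^2 * (t+2)^3 * (t^4 + 36*t^3 + 34*t^2 + 60*t + 13)"
    using nz unfolding pA3_def D_def by simp
  moreover have "pA4 t u * D = (t-1)^3 * (6*t^2 + 6*t - 12 + u)^3"
    using nz unfolding pA4_def D_def by simp
  moreover have "eA t u a b c * D = D * sfam 0 a b c + pA1 t u * D * sfam 1 a b c
      + pA2 t u * D * sfam 2 a b c + pA3 t u * D * sfam 3 a b c + pA4 t u * D * sfam 4 a b c"
    unfolding eA_def by (simp add: algebra_simps)
  ultimately have "eA t u a b c * D = eA_numer t u a b c"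
    unfolding eA_numer_def D_def by simp
  then show ?thesis using nz unfolding D_def by (simp add: eq_divide_eq)
qed

lemma eA_numer_zero_11t: "eA_numer t u 1 1 t = 0"
  by (simp add: eA_numer_def sfam_def S_def T_def U_def) algebra

lemma eA_numer_zero_s11: "eA_numer t ((t+2) * (7 - t - 5*t*s - s)) s 1 1 = 0"
  by (simp add: eA_numer_def sfam_def S_def T_def U_def) algebra

text \<open>The multipliers in this and the analogous lemma for family B come from Cramer's rule
  for the six linear conditions on the coefficients of \<open>x_odd_part cf\<close>.\<close>
lemma x5_coeff_eq_0_A:
  fixes cf :: "nat \<Rightarrow> nat \<Rightarrow> real"
  assumes "x_odd_part cf 1 1 t = 0" "x_odd_part cf 1 t 1 = 0" "x_odd_part cf t 1 1 = 0"
    "x_odd_part cf s 1 1 = 0" "x_odd_part cf 1 s 1 = 0" "x_odd_part cf 1 1 s = 0"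
    and "t \<noteq> 1" "s \<noteq> 1" "s \<noteq> t" "2*t*s + s + t - 4 \<noteq> 0"
  shows "cf 5 0 = 0"
proof -
  have "(-((t-1)^2*(s-1)^2*(t-s)^3*(2*t*s+s+t-4))) * cf 5 0 =
      (t^3*s^3 - 3*t^3*s^2 + 3*t^3*s - t^3 - 2*t^2*s^4 + 5*t^2*s^3 - 3*t^2*s^2 - t^2*s + t^2 + t*s^5 - t*s^4 - 3*t*s^3 + 5*t*s^2 - 2*t*s - s^5 + 3*s^4 - 3*s^3 + s^2) * x_odd_part cf 1 1 t
    + (t^3*s^3 - 3*t^3*s^2 + 3*t^3*s - t^3 - 2*t^2*s^4 + 5*t^2*s^3 - 3*t^2*s^2 - t^2*s + t^2 + t*s^5 - t*s^4 - 3*t*s^3 + 5*t*s^2 - 2*t*s - s^5 + 3*s^4 - 3*s^3 + s^2) * x_odd_part cf 1 t 1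
    + (0 - 2*t^4*s^3 + 3*t^4*s^2 - t^4 + 4*t^3*s^4 - 4*t^3*s^3 - 4*t^3*s + 4*t^3 - 2*t^2*s^5 - t^2*s^4 + 8*t^2*s^2 - 2*t^2*s - 3*t^2 + 2*t*s^5 - 8*t*s^2 + 6*t*s - 3*s^4 + 6*s^3 - 3*s^2) * x_odd_part cf t 1 1
    + (2*t^5*s^2 - 2*t^5*s - 4*t^4*s^3 + t^4*s^2 + 3*t^4 + 2*t^3*s^4 + 4*t^3*s^3 - 6*t^3 - 3*t^2*s^4 - 8*t^2*s^2 + 8*t^2*s + 3*t^2 + 4*t*s^3 + 2*t*s^2 - 6*t*s + s^4 - 4*s^3 + 3*s^2) * x_odd_part cf s 1 1
    + (0 - t^5*s + t^5 + 2*t^4*s^2 + t^4*s - 3*t^4 - t^3*s^3 - 5*t^3*s^2 + 3*t^3*s + 3*t^3 + 3*t^2*s^3 + 3*t^2*s^2 - 5*t^2*s - t^2 - 3*t*s^3 + t*s^2 + 2*t*s + s^3 - s^2) * x_odd_part cf 1 s 1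
    + (0 - t^5*s + t^5 + 2*t^4*s^2 + t^4*s - 3*t^4 - t^3*s^3 - 5*t^3*s^2 + 3*t^3*s + 3*t^3 + 3*t^2*s^3 + 3*t^2*s^2 - 5*t^2*s - t^2 - 3*t*s^3 + t*s^2 + 2*t*s + s^3 - s^2) * x_odd_part cf 1 1 s"
    by (simp add: x_odd_part_def) algebra
  with assms show ?thesis by simp
qed

lemma eA_zero_orbit_parameter:
  fixes t u :: real
  assumes t: "0 < t" "t < 7" and u: "0 < u" "u < muA t"
    and u_ne: "u \<noteq> 3 * (t - 1)^2 * (t + 2) / (2 * t + 1)"
  obtains s where "0 < s" "s \<noteq> 1" "s \<noteq> t" "2*t*s + s + t - 4 \<noteq> 0"
    "u = (t+2) * (7 - t - 5*t*s - s)"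
proof -
  have uL: "u < 9 * (t-1)^2" and uH: "u < (t+2) * (7-t)"
    using u unfolding muA_def muL_def muH_def by auto
  define s where "s = ((t+2) * (7-t) - u) / ((t+2) * (5*t+1))"
  have "s * ((t+2) * (5*t+1)) = (t+2) * (7-t) - u"
    using t unfolding s_def by simp
  then have u_s: "u = (t+2) * (7 - t - 5*t*s - s)" by algebra
  have "0 < s" unfolding s_def using uH t by simp
  have excluded: False if "u = (t+2) * (1-t) * k" "9 \<le> (t+2) * k" for k
  proof -
    have u_k: "u = (1-t) * ((t+2) * k)" using that(1) by (simp add: algebra_simps)
    have "0 < 1 - t"
    proof (rule ccontr)
      assume "\<not> 0 < 1 - t"
      then have "(1-t) * ((t+2) * k) \<le> 0" using that(2) by (intro mult_nonpos_nonneg) simp_all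
      with u(1) u_k show False by simp
    qed
    then have "(1-t) * 9 \<le> u" unfolding u_k using that(2) by (intro mult_left_mono) simp_all
    moreover have "(1-t) * (1-t) < (1-t) * 1"
      using \<open>0 < 1 - t\<close> t(1) by (intro mult_strict_left_mono) simp_all
    ultimately show False using uL by (simp add: power2_eq_square algebra_simps)
  qed
  have "s \<noteq> 1"
  proof
    assume "s = 1"
    then have "u = (t+2) * (1-t) * 6" using u_s by algebra
    then show False using excluded[of 6] t by simp
  qed
  moreover have "s \<noteq> t"
  proof
    assume "s = t"
    then have "u = (t+2) * (7 - t - 5*t*t - t)" using u_s by simp
    also have "\<dots> = (t+2) * (1-t) * (5*t+7)" by algebra
    finally have "u = (t+2) * (1-t) * (5*t+7)" .
    moreover have "9 \<le> (t+2) * (5*t+7)" using t by (simp add: algebra_simps)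
    ultimately show False using excluded by blast
  qed
  moreover have "2*t*s + s + t - 4 \<noteq> 0"
  proof
    assume "2*t*s + s + t - 4 = 0"
    then have "u * (2*t+1) = 3 * (t-1)^2 * (t+2)" using u_s by algebra
    then show False using u_ne t by (simp add: eq_divide_eq)
  qed
  ultimately show thesis using that \<open>0 < s\<close> u_s by blast
qed

lemma not_Sigma_3_10_eA:
  fixes t u :: real
  assumes t: "0 < t" "t < 7" "t \<noteq> 1" and u: "0 < u" "u < muA t"
    and u_ne: "u \<noteq> 3 * (t - 1)^2 * (t + 2) / (2 * t + 1)"
  shows "\<not> Sigma_3_10 (\<lambda>a b c. eA t u (a^2) (b^2) (c^2))"
proof -
  obtain s where s: "0 < s" "s \<noteq> 1" "s \<noteq> t" "2*t*s + s + t - 4 \<noteq> 0"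
    and u_s: "u = (t+2) * (7 - t - 5*t*s - s)"
    using eA_zero_orbit_parameter[OF t(1,2) u u_ne] by blast
  have zeros: "eA t u 1 1 t = 0" "eA t u s 1 1 = 0"
    using eA_eq_numer_div[OF t(1) u(1)] eA_numer_zero_11t eA_numer_zero_s11 u_s by simp_all
  moreover have "eA t u 1 t 1 = 0" "eA t u t 1 1 = 0" "eA t u 1 s 1 = 0" "eA t u 1 1 s = 0"
    using zeros eA_cyclic[of t u 1 t 1] eA_cyclic[of t u t 1 1] eA_cyclic[of t u 1 s 1]
      eA_cyclic[of t u 1 1 s]
    by simp_all
  ultimately show ?thesis
  proof (intro not_Sigma_3_10_by_zeros[where Z = "{(1,1,t), (1,t,1), (t,1,1), (s,1,1), (1,s,1), (1,1,s)}"])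
    show "eA t u 1 0 0 \<noteq> 0" by (simp add: eA_def sfam_def S_def T_def U_def)
  qed (use s t x5_coeff_eq_0_A[of _ t s] in auto)
qed

definition eB_numer :: "real \<Rightarrow> real \<Rightarrow> real \<Rightarrow> real \<Rightarrow> real \<Rightarrow> real" where
  "eB_numer t w a b c =
      t^2 * (t+2) * (sfam 0 a b c + (- 2*w - 3) * sfam 1 a b c + (w^2 + 2*w + 2) * sfam 2 a b c)
    + (- (2*t^3 + 4*t^2 + 5*t + 1) * w^2 + 2 * (4*t^2 + 5*t + 3) * t^2 * w
        - (3*t^3 - 7*t^2 - 12*t - 8) * t^2) * sfam 3 a b c
    + (t-1)^3 * (- (w^2) - 2 * t^2 * w + t^2 * (t-2)) * sfam 4 a b c"

lemma eB_eq_numer_div: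
  assumes "0 < t"
  shows "eB t u a b c = eB_numer t (omega u) a b c / (t^2 * (t+2))"
proof -
  have nz: "t \<noteq> 0" "t + 2 \<noteq> 0" using assms by auto
  have "pB3 t w * (t^2 * (t+2)) =
      - ((2*t^3 + 4*t^2 + 5*t + 1) / (t^2 * (t+2)) * (t^2 * (t+2))) * w^2
      + (2 * (4*t^2 + 5*t + 3) / (t+2) * (t+2)) * t^2 * w
      - ((3*t^3 - 7*t^2 - 12*t - 8) / (t+2) * (t+2)) * t^2" for w
    unfolding pB3_def by (simp add: algebra_simps)
  then have "pB3 t w * (t^2 * (t+2)) = - (2*t^3 + 4*t^2 + 5*t + 1) * w^2
      + 2 * (4*t^2 + 5*t + 3) * t^2 * w - (3*t^3 - 7*t^2 - 12*t - 8) * t^2" for w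
    using nz by simp
  moreover have "pB4 t w * (t^2 * (t+2)) = (t-1)^3 * (- (w^2) - 2 * t^2 * w + t^2 * (t-2))" for w
    using nz unfolding pB4_def by simp
  moreover have "eB t u a b c * (t^2 * (t+2)) =
      t^2 * (t+2) * (sfam 0 a b c + pB1 t (omega u) * sfam 1 a b c + pB2 t (omega u) * sfam 2 a b c)
      + pB3 t (omega u) * (t^2 * (t+2)) * sfam 3 a b c + pB4 t (omega u) * (t^2 * (t+2)) * sfam 4 a b c"
    unfolding eB_def Let_def by (simp add: algebra_simps)
  ultimately have "eB t u a b c * (t^2 * (t+2)) = eB_numer t (omega u) a b c"
    unfolding eB_numer_def pB1_def pB2_def by simp
  then show ?thesis using nz by (simp add: eq_divide_eq)
qed

lemma eB_numer_zero_11t: "eB_numer t w 1 1 t = 0"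
  by (simp add: eB_numer_def sfam_def S_def T_def U_def) algebra

lemma eB_numer_zero_1u0:
  assumes "w * u = (u-1)^2"
  shows "u^2 * eB_numer t w 1 u 0 = 0" "u^2 * eB_numer t w u 1 0 = 0"
  using assms by (simp_all add: eB_numer_def sfam_def S_def T_def U_def) algebra+

lemma x5_coeff_eq_0_B:
  fixes cf :: "nat \<Rightarrow> nat \<Rightarrow> real"
  assumes "x_odd_part cf 1 t 1 = 0" "x_odd_part cf t 1 1 = 0"
    "x_odd_part cf 1 u 0 = 0" "x_odd_part cf u 1 0 = 0" "x_odd_part cf 1 0 u = 0" "x_odd_part cf u 0 1 = 0"
    and "t \<noteq> 1" "0 < u" "u \<noteq> 1" "(2*t+1) * (u-1)^2 - t * (t-4) * u \<noteq> 0"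
  shows "cf 5 0 = 0"
proof -
  have "((t-1)*u*(u+1)^2*(u-1)^2*((2*t+1)*(u-1)^2-t*(t-4)*u)) * cf 5 0 =
      (u^6 - 2*u^4 + u^2) * x_odd_part cf 1 t 1
    + (0 - t*u^6 + 2*t*u^4 - t*u^2) * x_odd_part cf t 1 1
    + (0 - t^2*u^4 - t^2*u^3 + t^2*u^2 + t^2*u + t*u^4 + t*u^3 - t*u^2 - t*u) * x_odd_part cf 1 u 0
    + (t^2*u^5 + t^2*u^4 - t^2*u^3 - t^2*u^2 - t*u^5 - t*u^4 + t*u^3 + t*u^2) * x_odd_part cf u 1 0
    + (0 - t^2*u^3 + t^2*u + t*u^4 - t*u^2 - u^4 + u^3 + u^2 - u) * x_odd_part cf 1 0 u
    + (t^2*u^5 - t^2*u^3 - t*u^4 + t*u^2 - u^5 + u^4 + u^3 - u^2) * x_odd_part cf u 0 1"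
    by (simp add: x_odd_part_def) algebra
  moreover have "(u+1)^2 \<noteq> 0" using \<open>0 < u\<close> by simp
  ultimately show ?thesis using assms by simp
qed

lemma muB_pos:
  assumes "2 < t"
  shows "0 < muB t"
proof -
  have "t^2 \<le> (t-1) * (t+2)" using assms by (simp add: algebra_simps power2_eq_square)
  then have "t \<le> sqrt ((t-1) * (t+2))" using assms real_le_rsqrt by simp
  then have "t * t \<le> t * sqrt ((t-1) * (t+2))" using assms by (intro mult_left_mono) auto
  then have "2 \<le> muR t" unfolding muR_def by (simp add: power2_eq_square)
  then have "sqrt ((muR t)^2 - 4) < muR t"
    using real_sqrt_less_mono[of "(muR t)^2 - 4" "(muR t)^2"] by simp
  then show ?thesis unfolding muB_def by simp
qed

lemma not_Sigma_3_10_eB: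
  fixes t u :: real
  assumes t: "2 < t" and u: "muB t < u" "u < 1" and b_ne: "bB1 t (omega u) \<noteq> 0"
  shows "\<not> Sigma_3_10 (\<lambda>a b c. eB t u (a^2) (b^2) (c^2))"
proof -
  have "0 < u" using muB_pos[OF t] u by simp
  have "0 < t" using t by simp
  have w: "omega u * u = (u-1)^2"
    unfolding omega_def using \<open>0 < u\<close> by (simp add: field_simps power2_eq_square)
  then have "(2*t+1) * (u-1)^2 - t * (t-4) * u = u * bB1 t (omega u)"
    unfolding bB1_def by algebra
  then have det_ne: "(2*t+1) * (u-1)^2 - t * (t-4) * u \<noteq> 0" using \<open>0 < u\<close> b_ne by simp
  have "eB t u 1 1 t = 0" using eB_eq_numer_div[OF \<open>0 < t\<close>] eB_numer_zero_11t by simp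
  moreover have "eB t u 1 u 0 = 0" "eB t u u 1 0 = 0"
    using eB_eq_numer_div[OF \<open>0 < t\<close>] eB_numer_zero_1u0[OF w] \<open>0 < u\<close> by simp_all
  ultimately have "eB t u 1 t 1 = 0" "eB t u t 1 1 = 0" "eB t u 1 u 0 = 0" "eB t u u 1 0 = 0"
    "eB t u 1 0 u = 0" "eB t u u 0 1 = 0"
    using eB_cyclic[of t u 1 t 1] eB_cyclic[of t u t 1 1] eB_cyclic[of t u 1 0 u]
      eB_cyclic[of t u 0 u 1] eB_cyclic[of t u u 0 1] eB_cyclic[of t u 0 1 u]
    by simp_all
  then show ?thesis
  proof (intro not_Sigma_3_10_by_zeros[where Z = "{(1,t,1), (t,1,1), (1,u,0), (u,1,0), (1,0,u), (u,0,1)}"])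
    show "eB t u 1 0 0 \<noteq> 0" by (simp add: eB_def Let_def sfam_def S_def T_def U_def)
  qed (use \<open>0 < t\<close> \<open>0 < u\<close> t u det_ne x5_coeff_eq_0_B[of _ t u] in auto)
qed

theorem theorem4p26:
  shows "(\<forall>t u :: real. 0 < t \<and> t < 7 \<and> t \<noteq> 1 \<and> 0 < u \<and> u < muA t
            \<and> u \<noteq> 3 * (t - 1)^2 * (t + 2) / (2 * t + 1)
          \<longrightarrow> \<not> Sigma_3_10 (\<lambda>a b c. eA t u (a^2) (b^2) (c^2)))
       \<and> (\<forall>t u :: real. t > 2 \<and> muB t < u \<and> u < 1 \<and> bB1 t (omega u) \<noteq> 0
          \<longrightarrow> \<not> Sigma_3_10 (\<lambda>a b c. eB t u (a^2) (b^2) (c^2)))"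
  using not_Sigma_3_10_eA not_Sigma_3_10_eB by blast

end
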